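(* Let $(X,d)$ be a separable complete metric space, $\phi:X\times X\to[0,\infty)$ a Carath\'eodory distance, $(T,\mathsf{T},\mu)$ a $\sigma$-finite measure space and $h:T\times X\to[0,\infty]$ a Carath\'eodory function (measurable in $t$, continuous in $x$); set $F(z):=\int h(t,z)\,d\mu(t)$ and assume $\mathrm{zer}F:=\{z\mid F(z)=0\}$ is non-empty. Let $\tau,\sigma:[0,\infty)\to[0,\infty)$ be nondecreasing with $\tau(0)=\sigma(0)=0$ and $\tau(\varepsilon),\sigma(\varepsilon)>0$ for $\varepsilon>0$. Suppose that for all $x\in X$, \[\mu\big(\{t\in T\mid h(t,x)\ge\tau(\mathrm{dist}^\phi_{\mathrm{zer}F}(x))\}\big)\ge\sigma(\mathrm{dist}^\phi_{\mathrm{zer}F}(x)).\] Then $(\sigma\cdot\tau)(\varepsilon):=\sigma(\varepsilon)\tau(\varepsilon)$ is a modulus of $\phi$-regularity for $F$. Moreover, if $\tau$ and $\sigma$ are convex and $D$ is a collection of $X$-valued random variables (on some probability space) such that $\mathrm{dist}^\phi_{\mathrm{zer}F}(x)$ is integrable for all $x\in D$, then $\sigma\cdot\tau$ is a modulus of $\phi$-regularity for $F$ in mean w.r.t.\ $D$.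
   Context: A Carath\'eodory distance is a function $\phi:X\times X\to[0,\infty)$ continuous in its left argument and Borel measurable in its right argument; $\mathrm{dist}^\phi_S(x):=\inf_{s\in S}\phi(s,x)$. A modulus of $\phi$-regularity for $F$ is a function $\tau:(0,\infty)\to(0,\infty)$ such that for all $\varepsilon>0$ and $x\in X$, $F(x)<\tau(\varepsilon)$ implies $\mathrm{dist}^\phi_{\mathrm{zer}F}(x)<\varepsilon$. A modulus of $\phi$-regularity for $F$ in mean w.r.t.\ $D$ is a function $\tau:(0,\infty)\to(0,\infty)$ such that for all $\varepsilon>0$ and $x\in D$, $\mathbb{E}[F(x)]<\tau(\varepsilon)$ implies $\mathbb{E}[\mathrm{dist}^\phi_{\mathrm{zer}F}(x)]<\varepsilon$. *)

theory Defs
  imports "HOL-Probability.Probability"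
begin

definition distphi :: "('a \<Rightarrow> 'a \<Rightarrow> real) \<Rightarrow> 'a set \<Rightarrow> 'a \<Rightarrow> real" where
  "distphi \<phi> S x = (INF s\<in>S. \<phi> s x)"

definition phi_regularity_modulus ::
  "('a \<Rightarrow> 'a \<Rightarrow> real) \<Rightarrow> ('a \<Rightarrow> ennreal) \<Rightarrow> (real \<Rightarrow> real) \<Rightarrow> bool" where
  "phi_regularity_modulus \<phi> F \<tau> \<longleftrightarrow>
     (\<forall>e>0. \<tau> e > 0) \<and>
     (\<forall>e>0. \<forall>x. F x < ennreal (\<tau> e) \<longrightarrow> distphi \<phi> {z. F z = 0} x < e)"

definition phi_regularity_modulus_mean ::
  "('a \<Rightarrow> 'a \<Rightarrow> real) \<Rightarrow> ('a \<Rightarrow> ennreal) \<Rightarrow> (real \<Rightarrow> real) \<Rightarrow> 'w measure \<Rightarrow> ('w \<Rightarrow> 'a) set \<Rightarrow> bool" where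
  "phi_regularity_modulus_mean \<phi> F \<tau> P D \<longleftrightarrow>
     (\<forall>e>0. \<tau> e > 0) \<and>
     (\<forall>e>0. \<forall>x\<in>D. (\<integral>\<^sup>+ \<omega>. F (x \<omega>) \<partial>P) < ennreal (\<tau> e) \<longrightarrow>
        (\<integral> \<omega>. distphi \<phi> {z. F z = 0} (x \<omega>) \<partial>P) < e)"

end

theory Submission
  imports Defs
begin

text \<open>Markov's inequality gives
  \<open>F x \<ge> \<tau>(d x) \<cdot> \<mu>{t. h t x \<ge> \<tau>(d x)} \<ge> \<tau>(d x) \<sigma>(d x)\<close> for \<open>d = dist\<^sup>\<phi>\<^sub>zer F\<close>.
  As \<open>\<sigma>\<tau>\<close> is nondecreasing, \<open>F x < \<sigma>\<tau>(\<epsilon>)\<close> forces \<open>d x < \<epsilon>\<close>.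
  If \<open>\<sigma>\<close> and \<open>\<tau>\<close> are also convex, so is \<open>\<sigma>\<tau>\<close>, and Jensen's inequality yields
  \<open>\<sigma>\<tau>(E d(x)) \<le> E \<sigma>\<tau>(d(x)) \<le> E F(x)\<close>, which gives the statement in mean in the same way.\<close>

lemma mult_emeasure_superlevel_le_nn_integral:
  fixes c :: ennreal
  assumes "f \<in> borel_measurable M"
  shows "c * emeasure M {t \<in> space M. c \<le> f t} \<le> (\<integral>\<^sup>+ t. f t \<partial>M)"
proof -
  let ?A = "{t \<in> space M. c \<le> f t}"
  have "?A \<in> sets M"
    using assms by measurable
  then have "c * emeasure M ?A = (\<integral>\<^sup>+ t. c * indicator ?A t \<partial>M)"
    by (simp add: nn_integral_cmult_indicator)
  also have "\<dots> \<le> (\<integral>\<^sup>+ t. f t \<partial>M)"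
    by (intro nn_integral_mono) (auto simp: indicator_def)
  finally show ?thesis .
qed

lemma convex_on_UNIV_comp_max_0:
  fixes q :: "real \<Rightarrow> real"
  assumes convex: "convex_on {0..} q" and mono: "mono_on {0..} q"
  shows "convex_on UNIV (\<lambda>y. q (max 0 y))"
proof (rule convex_onI)
  fix t x y :: real
  assume t: "0 < t" "t < 1"
  have "max 0 ((1 - t) *\<^sub>R x + t *\<^sub>R y) \<le> (1 - t) *\<^sub>R max 0 x + t *\<^sub>R max 0 y"
    using t mult_pos_neg[of t y] mult_pos_neg[of "1 - t" x] by (auto simp: max_def mult_left_mono)
  then have "q (max 0 ((1 - t) *\<^sub>R x + t *\<^sub>R y)) \<le> q ((1 - t) *\<^sub>R max 0 x + t *\<^sub>R max 0 y)"
    using t by (intro mono_onD[OF mono]) auto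
  also have "\<dots> \<le> (1 - t) * q (max 0 x) + t * q (max 0 y)"
    using convex_onD[OF convex, of t "max 0 x" "max 0 y"] t by auto
  finally show "q (max 0 ((1 - t) *\<^sub>R x + t *\<^sub>R y)) \<le> (1 - t) * q (max 0 x) + t * q (max 0 y)" .
qed simp

text \<open>Jensen's inequality in the library needs an open interval; monotonicity lets \<open>q\<close> be
  extended convexly to \<open>\<real>\<close> by \<open>q (max 0 y)\<close>. In terms of the nonnegative integral no
  integrability of \<open>q \<circ> X\<close> is needed.\<close>

lemma (in prob_space) jensens_inequality_nonneg:
  fixes q :: "real \<Rightarrow> real"
  assumes X: "integrable M X" "\<And>\<omega>. \<omega> \<in> space M \<Longrightarrow> X \<omega> \<ge> 0"
    and q: "convex_on {0..} q" "mono_on {0..} q" "\<And>y. y \<ge> 0 \<Longrightarrow> q y \<ge> 0"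
  shows "ennreal (q (expectation X)) \<le> (\<integral>\<^sup>+ \<omega>. q (X \<omega>) \<partial>M)"
proof (cases "(\<integral>\<^sup>+ \<omega>. q (X \<omega>) \<partial>M) = \<infinity>")
  case False
  define q' where "q' = (\<lambda>y. q (max 0 y))"
  have "mono q'"
    unfolding q'_def mono_def using mono_onD[OF q(2)] by auto
  then have "q' \<in> borel_measurable borel"
    by (rule borel_measurable_mono)
  then have "(\<lambda>\<omega>. q' (X \<omega>)) \<in> borel_measurable M"
    using borel_measurable_integrable[OF X(1)] by measurable
  moreover have q'_nonneg: "q' y \<ge> 0" for y
    unfolding q'_def by (simp add: q(3))
  moreover have q'_X: "q' (X \<omega>) = q (X \<omega>)" if "\<omega> \<in> space M" for \<omega>
    unfolding q'_def using X(2)[OF that] by simp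
  then have nn_integral_q'_X: "(\<integral>\<^sup>+ \<omega>. q' (X \<omega>) \<partial>M) = (\<integral>\<^sup>+ \<omega>. q (X \<omega>) \<partial>M)"
    by (intro nn_integral_cong) simp
  ultimately have integrable_q'_X: "integrable M (\<lambda>\<omega>. q' (X \<omega>))"
    using False by (intro integrableI_nonneg) (simp_all add: less_top)
  have "q (expectation X) = q' (expectation X)"
    unfolding q'_def using X(2) by (simp add: integral_nonneg)
  also have "\<dots> \<le> expectation (\<lambda>\<omega>. q' (X \<omega>))"
    using convex_on_UNIV_comp_max_0[OF q(1,2)] integrable_q'_X
    by (intro jensens_inequality[OF X(1), of UNIV]) (auto simp: q'_def)
  finally have "ennreal (q (expectation X)) \<le> ennreal (expectation (\<lambda>\<omega>. q' (X \<omega>)))"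
    by (rule ennreal_leI)
  also have "\<dots> = (\<integral>\<^sup>+ \<omega>. q' (X \<omega>) \<partial>M)"
    using integrable_q'_X q'_nonneg by (intro nn_integral_eq_integral[symmetric]) auto
  also have "\<dots> = (\<integral>\<^sup>+ \<omega>. q (X \<omega>) \<partial>M)"
    by (rule nn_integral_q'_X)
  finally show ?thesis .
qed simp

lemma phi_regularity_modulus_if_lower_bound:
  fixes F :: "'a \<Rightarrow> ennreal" and g :: "real \<Rightarrow> real"
  assumes pos: "\<And>e. e > 0 \<Longrightarrow> g e > 0" and mono: "mono_on {0..} g"
    and bound: "\<And>x. ennreal (g (distphi \<phi> {z. F z = 0} x)) \<le> F x"
  shows "phi_regularity_modulus \<phi> F g"
  unfolding phi_regularity_modulus_def
proof (intro conjI allI impI)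
  fix e x
  assume e: "e > 0" and Fx: "F x < ennreal (g e)"
  show "distphi \<phi> {z. F z = 0} x < e"
  proof (rule ccontr)
    assume "\<not> ?thesis"
    then have "g e \<le> g (distphi \<phi> {z. F z = 0} x)"
      using e by (intro mono_onD[OF mono]) auto
    then have "ennreal (g e) \<le> F x"
      using bound[of x] ennreal_leI order_trans by blast
    then show False
      using Fx by simp
  qed
qed (rule pos)

lemma phi_regularity_modulus_mean_if_lower_bound:
  fixes F :: "'a \<Rightarrow> ennreal" and g :: "real \<Rightarrow> real"
  assumes P: "prob_space P"
    and pos: "\<And>e. e > 0 \<Longrightarrow> g e > 0" and nonneg: "\<And>e. e \<ge> 0 \<Longrightarrow> g e \<ge> 0"
    and mono: "mono_on {0..} g" and convex: "convex_on {0..} g"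
    and dist_nonneg: "\<And>x. distphi \<phi> {z. F z = 0} x \<ge> 0"
    and bound: "\<And>x. ennreal (g (distphi \<phi> {z. F z = 0} x)) \<le> F x"
    and integrable: "\<And>x. x \<in> D \<Longrightarrow> integrable P (\<lambda>\<omega>. distphi \<phi> {z. F z = 0} (x \<omega>))"
  shows "phi_regularity_modulus_mean \<phi> F g P D"
  unfolding phi_regularity_modulus_mean_def
proof (intro conjI allI impI ballI)
  interpret prob_space P by (rule P)
  fix e x
  assume e: "e > 0" and "x \<in> D" and Fx: "(\<integral>\<^sup>+ \<omega>. F (x \<omega>) \<partial>P) < ennreal (g e)"
  define X where "X = (\<lambda>\<omega>. distphi \<phi> {z. F z = 0} (x \<omega>))"
  have "integrable P X"
    unfolding X_def using \<open>x \<in> D\<close> by (rule integrable)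
  then have "ennreal (g (expectation X)) \<le> (\<integral>\<^sup>+ \<omega>. g (X \<omega>) \<partial>P)"
    using dist_nonneg convex mono nonneg by (intro jensens_inequality_nonneg) (auto simp: X_def)
  also have "\<dots> \<le> (\<integral>\<^sup>+ \<omega>. F (x \<omega>) \<partial>P)"
    unfolding X_def by (intro nn_integral_mono bound)
  finally have "ennreal (g (expectation X)) < ennreal (g e)"
    using Fx by (rule le_less_trans)
  moreover have "expectation X \<ge> 0"
    unfolding X_def using dist_nonneg by simp
  ultimately have "g (expectation X) < g e"
    using nonneg by (simp add: ennreal_less_iff)
  then show "(\<integral> \<omega>. distphi \<phi> {z. F z = 0} (x \<omega>) \<partial>P) < e"
    using e mono_onD[OF mono, of e "expectation X"] by (force simp: X_def)
qed (rule pos)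

theorem lemma3p10:
  fixes \<phi> :: "'a::polish_space \<Rightarrow> 'a \<Rightarrow> real"
    and M :: "'t measure"
    and h :: "'t \<Rightarrow> 'a \<Rightarrow> ennreal"
    and F :: "'a \<Rightarrow> ennreal"
    and \<tau> \<sigma> :: "real \<Rightarrow> real"
  assumes phi_nonneg: "\<And>x y. \<phi> x y \<ge> 0"
    and phi_cont: "\<And>y. continuous_on UNIV (\<lambda>x. \<phi> x y)"
    and phi_meas: "\<And>x. (\<lambda>y. \<phi> x y) \<in> borel_measurable borel"
    and sigma_finite: "sigma_finite_measure M"
    and h_meas: "\<And>x. (\<lambda>t. h t x) \<in> borel_measurable M"
    and h_cont: "\<And>t. continuous_on UNIV (h t)"
    and F_def: "F = (\<lambda>z. \<integral>\<^sup>+ t. h t z \<partial>M)"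
    and zer_ne: "{z. F z = 0} \<noteq> {}"
    and tau_nonneg: "\<And>e. e \<ge> 0 \<Longrightarrow> \<tau> e \<ge> 0"
    and sigma_nonneg: "\<And>e. e \<ge> 0 \<Longrightarrow> \<sigma> e \<ge> 0"
    and tau_mono: "mono_on {0..} \<tau>"
    and sigma_mono: "mono_on {0..} \<sigma>"
    and tau0: "\<tau> 0 = 0" and sigma0: "\<sigma> 0 = 0"
    and tau_pos: "\<And>e. e > 0 \<Longrightarrow> \<tau> e > 0"
    and sigma_pos: "\<And>e. e > 0 \<Longrightarrow> \<sigma> e > 0"
    and hyp: "\<And>x. emeasure M {t \<in> space M. h t x \<ge> ennreal (\<tau> (distphi \<phi> {z. F z = 0} x))}
                    \<ge> ennreal (\<sigma> (distphi \<phi> {z. F z = 0} x))"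
  shows "phi_regularity_modulus \<phi> F (\<lambda>e. \<sigma> e * \<tau> e) \<and>
         (convex_on {0..} \<tau> \<longrightarrow> convex_on {0..} \<sigma> \<longrightarrow>
           (\<forall>(P :: 'w measure) (D :: ('w \<Rightarrow> 'a) set).
              prob_space P \<and> D \<subseteq> borel_measurable P \<and>
              (\<forall>x\<in>D. integrable P (\<lambda>\<omega>. distphi \<phi> {z. F z = 0} (x \<omega>))) \<longrightarrow>
              phi_regularity_modulus_mean \<phi> F (\<lambda>e. \<sigma> e * \<tau> e) P D))"
proof -
  let ?d = "distphi \<phi> {z. F z = 0}"
  let ?g = "\<lambda>e. \<sigma> e * \<tau> e"
  have d_nonneg: "?d x \<ge> 0" for x
    unfolding distphi_def using zer_ne phi_nonneg by (intro cINF_greatest) auto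
  have lower_bound: "ennreal (?g (?d x)) \<le> F x" for x
  proof -
    have "ennreal (?g (?d x)) = ennreal (\<tau> (?d x)) * ennreal (\<sigma> (?d x))"
      using d_nonneg tau_nonneg sigma_nonneg by (simp add: ennreal_mult mult.commute)
    also have "\<dots> \<le> ennreal (\<tau> (?d x)) * emeasure M {t \<in> space M. ennreal (\<tau> (?d x)) \<le> h t x}"
      using hyp[of x] by (rule mult_left_mono) simp
    also have "\<dots> \<le> F x"
      unfolding F_def by (rule mult_emeasure_superlevel_le_nn_integral[OF h_meas])
    finally show ?thesis .
  qed
  have g_pos: "?g e > 0" if "e > 0" for e
    using that sigma_pos tau_pos by simp
  have g_nonneg: "?g e \<ge> 0" if "e \<ge> 0" for e
    using that sigma_nonneg tau_nonneg by simp
  have g_mono: "mono_on {0..} ?g"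
    using sigma_mono tau_mono sigma_nonneg tau_nonneg by (intro mono_on_mul) auto
  have g_convex: "convex_on {0..} ?g" if "convex_on {0..} \<tau>" "convex_on {0..} \<sigma>"
    using that sigma_mono tau_mono sigma_nonneg tau_nonneg by (intro convex_on_mul) auto
  show ?thesis
    using phi_regularity_modulus_if_lower_bound[OF g_pos g_mono lower_bound]
      phi_regularity_modulus_mean_if_lower_bound[OF _ g_pos g_nonneg g_mono g_convex d_nonneg lower_bound]
    by blast
qed

end
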